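(* Assume each $f_i$ is differentiable and $L$-smooth. Then for every $x\in\mathrm{St}(d,r)^\epsilon$, $\|\nabla\mathcal{L}(x)\|_F\le C\|\Lambda(x)\|_F$, where $C=\frac{3L'}{\lambda(1-\epsilon)}+2$.
   Context: Notation: $\mathrm{sym}(A)=\frac12(A+A^\top)$, $\mathrm{skew}(A)=\frac12(A-A^\top)$; $\langle A,B\rangle=\mathrm{Tr}(AB^\top)$; $\|\cdot\|_F$ Frobenius norm. $\mathrm{St}(d,r)=\{x\in\mathbb{R}^{d\times r}:x^\top x=I_r\}$; for $\epsilon\in(0,3/4)$, $\mathrm{St}(d,r)^\epsilon=\{x:\|x^\top x-I_r\|_F\le\epsilon\}$. Functions: $f_1,\dots,f_n:\mathbb{R}^{d\times r}\to\mathbb{R}$, $L$-smooth meaning $f_i(y)\le f_i(x)+\langle\nabla f_i(x),y-x\rangle+\frac L2\|y-x\|_F^2$; $f=\frac1n\sum_if_i$ is $C^2$. $\mathrm{grad}\, g(x)=\mathrm{skew}(\nabla g(x)x^\top)x$. For $\lambda>0$, $\Lambda(x)=\mathrm{grad} f(x)+\lambda x(x^\top x-I_r)$, $\Lambda_i$ analogously with $f_i$. $\hat L=\max(L,\max_{x\in\mathrm{St}(d,r)^\epsilon}\|\nabla f(x)\|_F)$, $s=\sup_{x\in\mathrm{St}(d,r)^\epsilon}\|\mathrm{sym}(x^\top\nabla f(x))\|_F$, $\gamma\ge\frac{2}{3-4\epsilon}\big(L(1-\epsilon)+3s+\hat L^2\frac{(1+\epsilon)^2}{\lambda(1-\epsilon)}\big)$.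 Merit function $\mathcal{L}(x)=f(x)-\frac12\langle\mathrm{sym}(x^\top\nabla f(x)),x^\top x-I_r\rangle+\frac\gamma4\|x^\top x-I_r\|_F^2$. $L_{\mathcal{L}}$: Lipschitz constant of $\nabla\mathcal{L}$ on $\mathrm{St}(d,r)^\epsilon$; $L_\Lambda$: constant such that $\Lambda$ and all $\Lambda_i$ are $L_\Lambda$-Lipschitz (standing property); $L'=\max\{\hat L,L_{\mathcal{L}},L_\Lambda\}$. *)

theory Defs
  imports "HOL-Analysis.Analysis"
begin

text \<open>Matrices in R^(d x r) are represented as real^'r^'d (rows indexed by 'd).
The Euclidean norm on nested vectors is the Frobenius norm, and the inner
product is the trace inner product Tr(A B^T).\<close>

definition msym :: "real^'n^'n \<Rightarrow> real^'n^'n" where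
  "msym A = (1/2) *\<^sub>R (A + transpose A)"

definition mskew :: "real^'n^'n \<Rightarrow> real^'n^'n" where
  "mskew A = (1/2) *\<^sub>R (A - transpose A)"

definition StiefelEps :: "real \<Rightarrow> (real^'r^'d) set" where
  "StiefelEps eps = {x. norm (transpose x ** x - mat 1) \<le> eps}"

text \<open>Riemannian gradient grad g(x) = skew(\<nabla>g(x) x^T) x, given the Euclidean gradient G = \<nabla>g(x).\<close>
definition rgrad :: "real^'r^'d \<Rightarrow> real^'r^'d \<Rightarrow> real^'r^'d" where
  "rgrad G x = mskew (G ** transpose x) ** x"

text \<open>\<Lambda>(x) = grad g(x) + \<lambda> x (x^T x - I), with G the Euclidean gradient of g at x.\<close>
definition LamMap :: "real \<Rightarrow> real^'r^'d \<Rightarrow> real^'r^'d \<Rightarrow> real^'r^'d" where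
  "LamMap lam G x = rgrad G x + lam *\<^sub>R (x ** (transpose x ** x - mat 1))"

text \<open>Merit function, given the value fx = f(x) and the Euclidean gradient G = \<nabla>f(x).\<close>
definition merit :: "real \<Rightarrow> real \<Rightarrow> real^'r^'d \<Rightarrow> real^'r^'d \<Rightarrow> real" where
  "merit gam fx G x = fx - (1/2) * (msym (transpose x ** G) \<bullet> (transpose x ** x - mat 1))
      + (gam/4) * (norm (transpose x ** x - mat 1))^2"

definition favg :: "nat \<Rightarrow> (nat \<Rightarrow> 'a \<Rightarrow> real) \<Rightarrow> 'a \<Rightarrow> real" where
  "favg n f y = (1 / real n) * (\<Sum>i<n. f i y)"

definition gavg :: "nat \<Rightarrow> (nat \<Rightarrow> 'a \<Rightarrow> 'b::real_vector) \<Rightarrow> 'a \<Rightarrow> 'b" where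
  "gavg n g y = (1 / real n) *\<^sub>R (\<Sum>i<n. g i y)"

end

theory Submission
  imports Defs
begin

(* Write E(z) = z^T z - I.  The Newton-Schulz map z |-> z (I - E(z)/2) roughly squares the
   defect E, so its iterates started at x converge geometrically to a point y of the Stiefel
   manifold with |x - y| <= |x E(x)| / (1 - eps).  Since the Riemannian gradient skew(G x^T) x is
   orthogonal to x E(x), |Lambda(x)| >= lam |x E(x)|, hence |x - y| <= |Lambda(x)| / (lam (1 - eps)).
   On the manifold the gradient of the merit function is the tangent projection
   g - y sym(y^T g) of g = grad f(y), whose norm is at most 2 |Lambda(y)|.  The Lipschitz
   bounds on grad merit and Lambda carry this estimate from y back to x. *)

lemma inner_matrix_eq_sum: "(A::real^'n^'m) \<bullet> B = (\<Sum>i\<in>UNIV. \<Sum>j\<in>UNIV. A$i$j * B$i$j)"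
  by (simp add: inner_vec_def)

lemma inner_matrix_mult_left:
  "((A::real^'n^'m) ** (B::real^'p^'n)) \<bullet> C = B \<bullet> (transpose A ** C)"
proof -
  have "(A ** B) \<bullet> C = (\<Sum>i\<in>UNIV. \<Sum>j\<in>UNIV. \<Sum>k\<in>UNIV. A$i$k * B$k$j * C$i$j)"
    by (simp add: inner_matrix_eq_sum matrix_matrix_mult_def sum_distrib_right)
  also have "\<dots> = (\<Sum>i\<in>UNIV. \<Sum>k\<in>UNIV. \<Sum>j\<in>UNIV. A$i$k * B$k$j * C$i$j)"
    by (rule sum.cong[OF refl], rule sum.swap)
  also have "\<dots> = (\<Sum>k\<in>UNIV. \<Sum>i\<in>UNIV. \<Sum>j\<in>UNIV. A$i$k * B$k$j * C$i$j)"
    by (rule sum.swap)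
  also have "\<dots> = (\<Sum>k\<in>UNIV. \<Sum>j\<in>UNIV. \<Sum>i\<in>UNIV. A$i$k * B$k$j * C$i$j)"
    by (rule sum.cong[OF refl], rule sum.swap)
  also have "\<dots> = B \<bullet> (transpose A ** C)"
    by (simp add: inner_matrix_eq_sum matrix_matrix_mult_def sum_distrib_left transpose_def mult_ac)
  finally show ?thesis .
qed

lemma inner_transpose: "transpose (A::real^'n^'m) \<bullet> transpose B = A \<bullet> B"
proof -
  have "transpose A \<bullet> transpose B = (\<Sum>i\<in>UNIV. \<Sum>j\<in>UNIV. A$j$i * B$j$i)"
    by (simp add: inner_matrix_eq_sum transpose_def)
  also have "\<dots> = A \<bullet> B"
    by (subst sum.swap) (simp add: inner_matrix_eq_sum)
  finally show ?thesis .
qed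

lemma norm_transpose: "norm (transpose (A::real^'n^'m)) = norm A"
  by (simp add: norm_eq_sqrt_inner inner_transpose)

lemma inner_matrix_mult_right:
  "((A::real^'n^'m) ** (B::real^'p^'n)) \<bullet> C = A \<bullet> (C ** transpose B)"
proof -
  have "(A ** B) \<bullet> C = (transpose B ** transpose A) \<bullet> transpose C"
    by (simp only: matrix_transpose_mul[symmetric] inner_transpose)
  also have "\<dots> = transpose A \<bullet> transpose (C ** transpose B)"
    by (simp add: inner_matrix_mult_left matrix_transpose_mul)
  also have "\<dots> = A \<bullet> (C ** transpose B)"
    by (rule inner_transpose)
  finally show ?thesis .
qed

lemma norm_matrix_mult_le: "norm ((A::real^'n^'m) ** (B::real^'p^'n)) \<le> norm A * norm B"
proof -
  have norm_rows: "(norm M)^2 = (\<Sum>i\<in>UNIV. (norm (M$i))^2)" for M :: "real^'q^'k"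
    by (simp add: power2_norm_eq_inner inner_vec_def)
  have norm_entries: "(norm v)^2 = (\<Sum>i\<in>UNIV. (v$i)^2)" for v :: "real^'q"
    unfolding power2_norm_eq_inner by (simp add: inner_vec_def power2_eq_square)
  have entry: "((A ** B)$i$j)^2 \<le> (norm (A$i))^2 * (norm (column j B))^2" for i j
  proof -
    have "\<bar>(A ** B)$i$j\<bar> \<le> norm (A$i) * norm (column j B)"
      using Cauchy_Schwarz_ineq2[of "A$i" "column j B"]
      by (simp add: matrix_matrix_mult_def inner_vec_def column_def)
    then have "\<bar>(A ** B)$i$j\<bar>^2 \<le> (norm (A$i) * norm (column j B))^2"
      by (intro power_mono) auto
    then show ?thesis by (simp add: power_mult_distrib)
  qed
  have "(norm (A ** B))^2 = (\<Sum>i\<in>UNIV. \<Sum>j\<in>UNIV. ((A ** B)$i$j)^2)"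
    by (simp add: norm_rows norm_entries)
  also have "\<dots> \<le> (\<Sum>i\<in>UNIV. \<Sum>j\<in>UNIV. (norm (A$i))^2 * (norm (column j B))^2)"
    by (intro sum_mono entry)
  also have "\<dots> = (\<Sum>i\<in>UNIV. (norm (A$i))^2) * (\<Sum>j\<in>UNIV. (norm (column j B))^2)"
    by (simp add: sum_product)
  also have "(\<Sum>j\<in>UNIV. (norm (column j B))^2) = (norm (transpose B))^2"
    by (simp add: norm_rows) (metis row_transpose row_def vec_lambda_eta)
  finally have "(norm (A ** B))^2 \<le> (norm A * norm B)^2"
    by (simp add: norm_rows norm_transpose power_mult_distrib)
  then show ?thesis
    by (meson mult_nonneg_nonneg norm_ge_zero power2_le_imp_le)
qed

lemma transpose_add: "transpose ((A::real^'n^'m) + B) = transpose A + transpose B"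
  by (simp add: transpose_def vec_eq_iff)

lemma transpose_diff: "transpose ((A::real^'n^'m) - B) = transpose A - transpose B"
  by (simp add: transpose_def vec_eq_iff)

lemma transpose_minus: "transpose (- (A::real^'n^'m)) = - transpose A"
  by (simp add: transpose_def vec_eq_iff)

lemma bounded_linear_transpose: "bounded_linear (transpose :: real^'n^'m \<Rightarrow> real^'m^'n)"
  by (rule bounded_linearI') (auto simp: transpose_add transpose_scalar)

lemma bounded_bilinear_matrix_mult:
  "bounded_bilinear ((**) :: real^'n^'m \<Rightarrow> real^'p^'n \<Rightarrow> real^'p^'m)"
proof
  show "\<exists>K. \<forall>a b. norm ((a::real^'n^'m) ** (b::real^'p^'n)) \<le> norm a * norm b * K"
    by (rule exI[of _ 1]) (simp add: norm_matrix_mult_le)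
  show "(a + a') ** b = a ** b + a' ** b" for a a' :: "real^'n^'m" and b :: "real^'p^'n"
    by (vector matrix_matrix_mult_def sum.distrib[symmetric] field_simps)
qed (auto simp: matrix_add_ldistrib scalar_matrix_assoc matrix_scalar_ac)

lemmas matrix_mult_arith =
  bounded_bilinear.add_left[OF bounded_bilinear_matrix_mult]
  bounded_bilinear.add_right[OF bounded_bilinear_matrix_mult]
  bounded_bilinear.diff_left[OF bounded_bilinear_matrix_mult]
  bounded_bilinear.diff_right[OF bounded_bilinear_matrix_mult]
  bounded_bilinear.minus_left[OF bounded_bilinear_matrix_mult]
  bounded_bilinear.minus_right[OF bounded_bilinear_matrix_mult]
  bounded_bilinear.scaleR_left[OF bounded_bilinear_matrix_mult]
  bounded_bilinear.scaleR_right[OF bounded_bilinear_matrix_mult]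
  matrix_mul_assoc matrix_transpose_mul transpose_add transpose_diff transpose_minus transpose_scalar

lemma inner_skew_sym_eq_0:
  "transpose K = - K \<Longrightarrow> transpose S = S \<Longrightarrow> (K::real^'n^'n) \<bullet> S = 0"
  using inner_transpose[of K S] by simp

lemma transpose_mskew: "transpose (mskew M) = - mskew M"
  by (simp add: mskew_def transpose_diff transpose_scalar algebra_simps)

lemma transpose_msym: "transpose (msym M) = msym M"
  by (simp add: msym_def transpose_add transpose_scalar algebra_simps)

lemma bounded_linear_msym: "bounded_linear (msym :: real^'n^'n \<Rightarrow> real^'n^'n)"
  by (rule bounded_linearI') (auto simp: msym_def transpose_add transpose_scalar algebra_simps)

definition gram_defect :: "real^'r^'d \<Rightarrow> real^'r^'r" where
  "gram_defect z = transpose z ** z - mat 1"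

lemma StiefelEps_iff: "z \<in> StiefelEps eps \<longleftrightarrow> norm (gram_defect z) \<le> eps"
  by (simp add: StiefelEps_def gram_defect_def)

lemma transpose_gram_defect: "transpose (gram_defect z) = gram_defect z"
  by (simp add: gram_defect_def matrix_mult_arith)

lemma gram_eq_gram_defect: "transpose z ** z = mat 1 + gram_defect z"
  by (simp add: gram_defect_def)

lemma gram_defect_minus: "gram_defect (- z) = gram_defect z"
  by (simp add: gram_defect_def matrix_mult_arith)

lemma continuous_on_gram_defect: "continuous_on S gram_defect"
  unfolding gram_defect_def
  by (intro continuous_intros bounded_bilinear.continuous_on[OF bounded_bilinear_matrix_mult]
      linear_continuous_on bounded_linear_transpose)

lemma power2_norm_mult_le_gram_defect:
  "(norm (z ** M))^2 \<le> (1 + norm (gram_defect z)) * (norm M)^2"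
proof -
  have "(norm (z ** M))^2 = M \<bullet> M + M \<bullet> (gram_defect z ** M)"
    by (simp add: power2_norm_eq_inner inner_matrix_mult_left matrix_mul_assoc
        gram_eq_gram_defect matrix_mult_arith inner_add_right)
  also have "M \<bullet> (gram_defect z ** M) \<le> norm M * norm (gram_defect z ** M)"
    by (rule Cauchy_Schwarz_ineq2[THEN abs_le_D1])
  also have "\<dots> \<le> norm M * (norm (gram_defect z) * norm M)"
    by (simp add: mult_left_mono norm_matrix_mult_le)
  finally show ?thesis by (simp add: dot_square_norm algebra_simps power2_eq_square)
qed

lemma norm_mult_gram_defect_le:
  "norm (z ** gram_defect z) \<le> sqrt (1 + norm (gram_defect z)) * norm (gram_defect z)"
  using real_sqrt_le_mono[OF power2_norm_mult_le_gram_defect[of z "gram_defect z"]]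
  by (simp add: real_sqrt_mult)

lemma norm_mult_gram_defect_ge:
  assumes "norm (gram_defect z) \<le> 1"
  shows "norm (gram_defect z) * (1 - norm (gram_defect z)) \<le> norm (z ** gram_defect z)"
proof -
  let ?E = "gram_defect z" and ?e = "norm (gram_defect z)"
  have "(norm (z ** ?E))^2 = ?e^2 + ?E \<bullet> (?E ** ?E)"
    by (simp add: power2_norm_eq_inner inner_matrix_mult_left matrix_mul_assoc
        gram_eq_gram_defect matrix_mult_arith inner_add_right)
  moreover have "- (?E \<bullet> (?E ** ?E)) \<le> ?e * norm (?E ** ?E)"
    by (rule Cauchy_Schwarz_ineq2[THEN abs_le_D2])
  moreover have "\<dots> \<le> ?e * (?e * ?e)"
    by (simp add: mult_left_mono norm_matrix_mult_le)
  moreover have "(?e * (1 - ?e))^2 \<le> ?e^2 * (1 - ?e)"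
    using assms mult_right_le_one_le[of "?e^2 * (1 - ?e)" "1 - ?e"]
    by (simp add: power2_eq_square mult_ac)
  ultimately have "(?e * (1 - ?e))^2 \<le> (norm (z ** ?E))^2"
    by (simp add: algebra_simps power2_eq_square)
  then show ?thesis by (rule power2_le_imp_le) simp
qed

(* One Newton-Schulz step towards the polar factor z (z^T z)^(-1/2) of z. *)
definition polar_step :: "real^'r^'d \<Rightarrow> real^'r^'d" where
  "polar_step z = z ** (mat 1 - (1/2) *\<^sub>R gram_defect z)"

lemma gram_defect_polar_step:
  "gram_defect (polar_step z) =
     (-(3/4)) *\<^sub>R (gram_defect z ** gram_defect z)
     + (1/4) *\<^sub>R (gram_defect z ** gram_defect z ** gram_defect z)"
proof -
  let ?E = "gram_defect z"
  let ?P = "mat 1 - (1/2) *\<^sub>R ?E"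
  have "transpose (polar_step z) ** polar_step z = ?P ** (mat 1 + ?E) ** ?P"
    by (simp add: polar_step_def matrix_mult_arith transpose_gram_defect flip: gram_eq_gram_defect)
  also have "\<dots> = mat 1 + ((-(3/4)) *\<^sub>R (?E ** ?E) + (1/4) *\<^sub>R (?E ** ?E ** ?E))"
    by (simp add: matrix_mult_arith scaleR_diff_right scaleR_add_right)
      (simp add: algebra_simps flip: scaleR_add_left)
  finally show ?thesis by (simp add: gram_defect_def)
qed

lemma norm_gram_defect_polar_step_le:
  "norm (gram_defect (polar_step z)) \<le> (norm (gram_defect z))^2 * (3 + norm (gram_defect z)) / 4"
proof -
  let ?E = "gram_defect z" and ?e = "norm (gram_defect z)"
  have sq: "norm (?E ** ?E) \<le> ?e^2"
    using norm_matrix_mult_le[of ?E ?E] by (simp add: power2_eq_square)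
  have cube: "norm (?E ** ?E ** ?E) \<le> ?e^2 * ?e"
    by (meson sq norm_matrix_mult_le mult_right_mono norm_ge_zero order_trans)
  have "norm (gram_defect (polar_step z)) \<le> (3/4) * norm (?E ** ?E) + (1/4) * norm (?E ** ?E ** ?E)"
    using norm_triangle_ineq[of "(-(3/4)) *\<^sub>R (?E ** ?E)" "(1/4) *\<^sub>R (?E ** ?E ** ?E)"]
    by (simp add: gram_defect_polar_step)
  also have "\<dots> \<le> (3/4) * ?e^2 + (1/4) * (?e^2 * ?e)"
    using sq cube by linarith
  finally show ?thesis by (simp add: field_simps)
qed

lemma norm_polar_step_diff: "norm (polar_step z - z) = norm (z ** gram_defect z) / 2"
  by (simp add: polar_step_def matrix_mult_arith)

lemma convergent_geometric_increments:
  fixes y :: "nat \<Rightarrow> 'a::banach"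
  assumes steps: "\<And>k. norm (y (Suc k) - y k) \<le> c * q^k" and q: "0 \<le> q" "q < 1"
  obtains l where "y \<longlonglongrightarrow> l" "norm (l - y 0) \<le> c / (1 - q)"
proof -
  have geom: "(\<lambda>k. c * q^k) sums (c / (1 - q))"
    using sums_mult[OF geometric_sums[of q]] q by simp
  have summ: "summable (\<lambda>k. y (Suc k) - y k)"
    by (rule summable_comparison_test'[OF sums_summable[OF geom] steps])
  have "(\<lambda>n. y 0 + (\<Sum>k<n. y (Suc k) - y k)) \<longlonglongrightarrow> y 0 + (\<Sum>k. y (Suc k) - y k)"
    by (intro tendsto_add tendsto_const summable_LIMSEQ summ)
  then have "y \<longlonglongrightarrow> y 0 + (\<Sum>k. y (Suc k) - y k)"
    by (simp add: sum_lessThan_telescope)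
  moreover have "norm (\<Sum>k. y (Suc k) - y k) \<le> c / (1 - q)"
    using norm_suminf_le[OF steps sums_summable[OF geom]] sums_unique[OF geom] by simp
  ultimately show thesis by (intro that) auto
qed

lemma norm_gram_defect_polar_iterate_le:
  fixes x :: "real^'r^'d"
  defines "e \<equiv> norm (gram_defect x)"
  defines "q \<equiv> e * (3 + e) / 4"
  assumes e: "e \<le> 3/4"
  shows "norm (gram_defect ((polar_step ^^ k) x)) \<le> q^k * e"
proof (induction k)
  case 0 then show ?case by (simp add: e_def)
next
  case (Suc k)
  let ?e = "norm (gram_defect ((polar_step ^^ k) x))"
  have e0: "0 \<le> e" and q0: "0 \<le> q" unfolding q_def e_def by simp_all
  have "e * (3 + e) \<le> 3/4 * (3 + 3/4)" using e e0 by (intro mult_mono) auto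
  then have "q^k * e \<le> e" using q0 e0 by (simp add: q_def mult_left_le_one_le power_le_one)
  then have "?e \<le> e" using Suc by linarith
  then have "?e * (3 + ?e) / 4 \<le> q" unfolding q_def using e0 by (intro divide_right_mono mult_mono) auto
  have "norm (gram_defect ((polar_step ^^ Suc k) x)) \<le> ?e * (?e * (3 + ?e) / 4)"
    using norm_gram_defect_polar_step_le[of "(polar_step ^^ k) x"] by (simp add: power2_eq_square mult_ac)
  also have "\<dots> \<le> q^k * e * q"
    using Suc \<open>?e * (3 + ?e) / 4 \<le> q\<close> q0 e0 by (intro mult_mono) auto
  finally show ?case by (simp add: mult_ac)
qed

lemma stiefel_point_near_estimate:
  fixes x :: "real^'r^'d"
  defines "e \<equiv> norm (gram_defect x)"
  defines "q \<equiv> e * (3 + e) / 4"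
  assumes e: "e \<le> 3/4"
  obtains y where "gram_defect y = 0" "norm (x - y) \<le> sqrt (1 + e) * e / (2 * (1 - q))"
proof -
  define y where "y k = (polar_step ^^ k) x" for k
  define c where "c = sqrt (1 + e) * e / 2"
  have e0: "0 \<le> e" and q0: "0 \<le> q" unfolding q_def e_def by simp_all
  have "e * (3 + e) \<le> 3/4 * (3 + 3/4)" using e e0 by (intro mult_mono) auto
  then have q1: "q < 1" unfolding q_def by simp
  have defect: "norm (gram_defect (y k)) \<le> q^k * e" for k
    using norm_gram_defect_polar_iterate_le[OF e[unfolded e_def]] by (simp add: y_def e_def q_def)
  have steps: "norm (y (Suc k) - y k) \<le> c * q^k" for k
  proof -
    let ?e = "norm (gram_defect (y k))"
    have "q^k * e \<le> e" using q0 q1 e0 by (simp add: mult_left_le_one_le power_le_one)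
    then have "?e \<le> e" using defect[of k] by linarith
    have "norm (y (Suc k) - y k) = norm (y k ** gram_defect (y k)) / 2"
      by (simp add: y_def norm_polar_step_diff)
    also have "\<dots> \<le> sqrt (1 + ?e) * ?e / 2"
      using norm_mult_gram_defect_le[of "y k"] by simp
    also have "\<dots> \<le> sqrt (1 + e) * (q^k * e) / 2"
      using \<open>?e \<le> e\<close> defect[of k] e0 by (intro divide_right_mono mult_mono) auto
    finally show ?thesis by (simp add: c_def mult_ac)
  qed
  have y0: "y 0 = x" by (simp add: y_def)
  obtain l where lim: "y \<longlonglongrightarrow> l" and dist: "norm (l - x) \<le> c / (1 - q)"
    using convergent_geometric_increments[OF steps q0 q1] unfolding y0 by blast
  have "(\<lambda>k. gram_defect (y k)) \<longlonglongrightarrow> gram_defect l"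
    using continuous_on_tendsto_compose[OF continuous_on_gram_defect[of UNIV] lim] by simp
  moreover have "(\<lambda>k. gram_defect (y k)) \<longlonglongrightarrow> 0"
  proof (rule Lim_null_comparison)
    show "\<forall>\<^sub>F k in sequentially. norm (gram_defect (y k)) \<le> q^k * e"
      using defect by simp
    show "(\<lambda>k. q^k * e) \<longlonglongrightarrow> 0"
      using q0 q1 by (intro tendsto_mult_left_zero LIMSEQ_power_zero) simp
  qed
  ultimately have "gram_defect l = 0" by (rule LIMSEQ_unique)
  moreover have "norm (x - l) \<le> sqrt (1 + e) * e / (2 * (1 - q))"
    using dist by (simp add: c_def norm_minus_commute)
  ultimately show thesis by (rule that)
qed

lemma stiefel_point_near:
  fixes x :: "real^'r^'d"
  assumes x: "norm (gram_defect x) \<le> eps" and eps: "eps < 3/4"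
  obtains y where "gram_defect y = 0" "norm (x - y) \<le> norm (x ** gram_defect x) / (1 - eps)"
proof -
  define e where "e = norm (gram_defect x)"
  define a where "a = norm (x ** gram_defect x)"
  define e1 where "e1 = norm (gram_defect (polar_step x))"
  have e: "0 \<le> e" "e \<le> eps" and e1: "0 \<le> e1" using x by (simp_all add: e_def e1_def)
  have "e^2 * (3 + e) \<le> e^2 * (3 + 3/4)" using e eps by (intro mult_left_mono) auto
  then have e1_le: "e1 \<le> (15/16) * e^2"
    using norm_gram_defect_polar_step_le[of x] by (simp add: e_def e1_def)
  have "(15/16) * e^2 \<le> (15/16) * (3/4)^2" using e eps by (intro mult_left_mono power_mono) auto
  then have e1_small: "e1 \<le> 135/256" using e1_le by (simp add: power2_eq_square)
  \<comment> \<open>The first step already makes the defect small enough for crude constants in the tail.\<close>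
  obtain y where y: "gram_defect y = 0"
    and near: "norm (polar_step x - y) \<le> sqrt (1 + e1) * e1 / (2 * (1 - e1 * (3 + e1) / 4))"
    using stiefel_point_near_estimate[of "polar_step x"] e1_small unfolding e1_def by force
  have "sqrt (1 + e1) \<le> 5/4" using e1_small by (intro real_le_lsqrt) (auto simp: power2_eq_square)
  moreover have "e1 * (3 + e1) \<le> 135/256 * (3 + 135/256)" using e1 e1_small by (intro mult_mono) auto
  ultimately have "sqrt (1 + e1) * e1 / (2 * (1 - e1 * (3 + e1) / 4)) \<le> (5/4) * e1 / (2 * (53/100))"
    using e1 by (intro frac_le mult_right_mono) auto
  then have tail: "norm (polar_step x - y) \<le> (1875/1696) * e^2"
    using near e1_le by simp
  have head: "norm (x - polar_step x) = a / 2"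
    using norm_polar_step_diff[of x] by (simp add: a_def norm_minus_commute)
  have a: "e * (1 - e) \<le> a"
    using norm_mult_gram_defect_ge[of x] e eps by (simp add: a_def e_def)
  have "(1875/1696) * e^2 \<le> e * (1 + e) / 2"
    using e eps mult_right_mono[of e "3/4" e] by (simp add: power2_eq_square algebra_simps)
  also have "\<dots> \<le> a / (1 - e) * (1 + e) / 2"
    using a e eps by (intro divide_right_mono mult_right_mono) (auto simp: pos_le_divide_eq)
  also have "\<dots> = a / (1 - e) - a / 2" using e eps by (simp add: field_simps)
  also have "\<dots> \<le> a / (1 - eps) - a / 2"
    using e eps by (simp add: a_def frac_le)
  finally have "norm (x - y) \<le> a / (1 - eps)"
    using norm_diff_triangle_le[OF eq_refl[OF head] tail] by linarith
  with y show thesis unfolding a_def by (rule that)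
qed

lemma norm_LamMap_ge: "lam * norm (z ** gram_defect z) \<le> norm (LamMap lam G z)"
proof -
  let ?v = "z ** gram_defect z"
  have "rgrad G z \<bullet> ?v = mskew (G ** transpose z) \<bullet> (?v ** transpose z)"
    by (simp add: rgrad_def inner_matrix_mult_right)
  also have "\<dots> = 0"
    by (rule inner_skew_sym_eq_0[OF transpose_mskew])
      (simp add: matrix_mult_arith transpose_gram_defect)
  finally have "LamMap lam G z \<bullet> ?v = lam * (norm ?v)^2"
    by (simp add: LamMap_def inner_add_left power2_norm_eq_inner flip: gram_defect_def)
  then have "lam * norm ?v * norm ?v \<le> norm (LamMap lam G z) * norm ?v"
    using Cauchy_Schwarz_ineq2[of "LamMap lam G z" ?v] by (simp add: power2_eq_square mult_ac)
  then show ?thesis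
    by (cases "norm ?v = 0") auto
qed

lemma stiefel_point_near_LamMap:
  assumes x: "x \<in> StiefelEps eps" and eps: "eps < 3/4" and lam: "lam > 0"
  obtains y where "gram_defect y = 0" "norm (x - y) \<le> norm (LamMap lam G x) / (lam * (1 - eps))"
proof -
  obtain y where y: "gram_defect y = 0"
    and near: "norm (x - y) \<le> norm (x ** gram_defect x) / (1 - eps)"
    using stiefel_point_near x eps unfolding StiefelEps_iff by blast
  have "norm (x ** gram_defect x) / (1 - eps) \<le> norm (LamMap lam G x) / (lam * (1 - eps))"
    using norm_LamMap_ge[of lam x G] lam eps
    by (simp add: divide_right_mono pos_le_divide_eq mult.commute flip: divide_divide_eq_left)
  with near have "norm (x - y) \<le> norm (LamMap lam G x) / (lam * (1 - eps))" by linarith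
  with y show thesis by (rule that)
qed

definition tangent_proj :: "real^'r^'d \<Rightarrow> real^'r^'d \<Rightarrow> real^'r^'d" where
  "tangent_proj y g = g - y ** msym (transpose y ** g)"

lemma norm_tangent_proj_le_LamMap:
  fixes y g :: "real^'r^'d"
  assumes y: "transpose y ** y = mat 1"
  shows "norm (tangent_proj y g) \<le> 2 * norm (LamMap lam g y)"
proof -
  have y_cancel: "A ** transpose y ** y = A" for A :: "real^'r^'k"
    by (metis matrix_mul_assoc y matrix_mul_rid)
  define u where "u = g - y ** (transpose y ** g)"
  define K where "K = transpose y ** g - transpose g ** y"
  have LamMap_y: "LamMap lam g y = (1/2) *\<^sub>R (u + y ** K)"
    by (simp add: LamMap_def rgrad_def mskew_def u_def K_def y y_cancel matrix_mult_arith algebra_simps)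
  have tangent_proj_y: "tangent_proj y g = u + (1/2) *\<^sub>R (y ** K)"
    by (simp add: tangent_proj_def msym_def u_def K_def y y_cancel matrix_mult_arith algebra_simps)
  \<comment> \<open>\<open>u\<close> is orthogonal to the column space of \<open>y\<close>, and \<open>y K\<close> lies in it.\<close>
  have "transpose y ** u = 0" by (simp add: u_def matrix_mult_arith y)
  then have orth: "u \<bullet> (y ** K) = 0"
    using inner_matrix_mult_left[of y K u] by (simp add: inner_commute)
  have "(norm (tangent_proj y g))^2 = (norm u)^2 + (1/4) * (norm (y ** K))^2"
    using orth by (simp add: tangent_proj_y power2_norm_eq_inner inner_add_left inner_add_right inner_commute)
  also have "\<dots> \<le> (norm (u + y ** K))^2"
    using orth by (simp add: power2_norm_eq_inner inner_add_left inner_add_right inner_commute)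
  also have "\<dots> = (2 * norm (LamMap lam g y))^2"
    by (simp add: LamMap_y power_mult_distrib)
  finally show ?thesis
    by (rule power2_le_imp_le) simp
qed

lemma merit_has_derivative_at_stiefel:
  fixes G :: "real^'r^'d \<Rightarrow> real^'r^'d" and F :: "real^'r^'d \<Rightarrow> real"
  assumes dG: "(G has_derivative G') (at y)"
    and dF: "(F has_derivative (\<lambda>h. G y \<bullet> h)) (at y)"
    and y: "gram_defect y = 0"
  shows "((\<lambda>z. merit gam (F z) (G z) z) has_derivative
      (\<lambda>h. G y \<bullet> h - (1/2) * (msym (transpose y ** G y) \<bullet> (transpose y ** h + transpose h ** y)))) (at y)"
proof -
  let ?T = "\<lambda>z. msym (transpose z ** G z)"
  let ?Q = "\<lambda>z. transpose z ** z - mat 1 :: real^'r^'r"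
  let ?dQ = "\<lambda>h. transpose y ** h + transpose h ** y"
  have dtr: "(transpose has_derivative transpose) (at y)"
    by (rule bounded_linear_imp_has_derivative[OF bounded_linear_transpose])
  have dT: "(?T has_derivative (\<lambda>h. msym (transpose y ** G' h + transpose h ** G y))) (at y)"
    by (intro bounded_linear.has_derivative[OF bounded_linear_msym]
        bounded_bilinear.FDERIV[OF bounded_bilinear_matrix_mult] dtr dG)
  have "(?Q has_derivative (\<lambda>h. ?dQ h - 0)) (at y)"
    by (intro has_derivative_diff has_derivative_const has_derivative_ident
        bounded_bilinear.FDERIV[OF bounded_bilinear_matrix_mult] dtr)
  then have dQ: "(?Q has_derivative ?dQ) (at y)" by simp
  have "(\<lambda>z. merit gam (F z) (G z) z) = (\<lambda>z. F z - (1/2) * (?T z \<bullet> ?Q z) + (gam/4) * (?Q z \<bullet> ?Q z))"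
    by (simp add: merit_def power2_norm_eq_inner)
  then have "((\<lambda>z. merit gam (F z) (G z) z) has_derivative
      (\<lambda>h. G y \<bullet> h - (1/2) * (?T y \<bullet> ?dQ h + msym (transpose y ** G' h + transpose h ** G y) \<bullet> ?Q y)
          + (gam/4) * (?Q y \<bullet> ?dQ h + ?dQ h \<bullet> ?Q y))) (at y)"
    by (simp only:) (intro has_derivative_add has_derivative_diff has_derivative_mult_right
        has_derivative_inner dF dT dQ)
  moreover have "?Q y = 0" using y by (simp add: gram_defect_def)
  ultimately show ?thesis by simp
qed

lemma merit_gradient_eq_tangent_proj:
  fixes G :: "real^'r^'d \<Rightarrow> real^'r^'d" and F :: "real^'r^'d \<Rightarrow> real"
  assumes dG: "(G has_derivative G') (at y)"
    and dF: "(F has_derivative (\<lambda>h. G y \<bullet> h)) (at y)"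
    and dM: "((\<lambda>z. merit gam (F z) (G z) z) has_derivative (\<lambda>h. g \<bullet> h)) (at y)"
    and y: "gram_defect y = 0"
  shows "g = tangent_proj y (G y)"
proof -
  let ?T = "msym (transpose y ** G y)"
  have "G y \<bullet> h - (1/2) * (?T \<bullet> (transpose y ** h + transpose h ** y)) = tangent_proj y (G y) \<bullet> h"
    for h
  proof -
    have "?T \<bullet> (transpose h ** y) = transpose ?T \<bullet> transpose (transpose h ** y)"
      by (simp add: inner_transpose)
    also have "\<dots> = ?T \<bullet> (transpose y ** h)"
      by (simp add: transpose_msym matrix_transpose_mul)
    finally show ?thesis
      by (simp add: tangent_proj_def inner_add_right inner_diff_left inner_matrix_mult_left)
  qed
  then have "(\<lambda>h. g \<bullet> h) = (\<lambda>h. tangent_proj y (G y) \<bullet> h)"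
    using has_derivative_unique[OF dM merit_has_derivative_at_stiefel[OF dG dF y]] by simp
  then have "(g - tangent_proj y (G y)) \<bullet> (g - tangent_proj y (G y)) = 0"
    by (metis inner_diff_left right_minus_eq)
  then show ?thesis by simp
qed

lemma has_derivative_favg:
  assumes "\<And>i. i < n \<Longrightarrow> (f i has_derivative (\<lambda>h. g i y \<bullet> h)) (at y)"
  shows "(favg n f has_derivative (\<lambda>h. gavg n g y \<bullet> h)) (at y)"
proof -
  have "((\<lambda>z. (1 / real n) * (\<Sum>i<n. f i z)) has_derivative
      (\<lambda>h. (1 / real n) * (\<Sum>i<n. g i y \<bullet> h))) (at y)"
    by (intro has_derivative_mult_right has_derivative_sum assms) simp
  moreover have "(\<lambda>z. (1 / real n) * (\<Sum>i<n. f i z)) = favg n f"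
    by (simp add: favg_def fun_eq_iff)
  moreover have "(\<lambda>h. (1 / real n) * (\<Sum>i<n. g i y \<bullet> h)) = (\<lambda>h. gavg n g y \<bullet> h)"
    by (simp add: gavg_def fun_eq_iff inner_sum_left)
  ultimately show ?thesis by simp
qed

lemma lipschitz_bound_nonneg:
  fixes g :: "'a::real_normed_vector \<Rightarrow> 'b::real_normed_vector"
  assumes "\<And>y z. y \<in> S \<Longrightarrow> z \<in> S \<Longrightarrow> norm (g y - g z) \<le> K * norm (y - z)"
    and "a \<in> S" "b \<in> S" "a \<noteq> b"
  shows "0 \<le> K"
proof -
  have "0 \<le> K * norm (a - b)" using assms(1)[OF assms(2,3)] norm_ge_zero order_trans by blast
  then show ?thesis using assms(4) by (simp add: zero_le_mult_iff)
qed

lemma one_le_norm_mat_1: "1 \<le> norm (mat 1 :: real^'n^'n)"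
proof -
  fix i :: 'n
  have "\<bar>(mat 1 :: real^'n^'n) $ i $ i\<bar> \<le> norm ((mat 1 :: real^'n^'n) $ i)"
    by (rule component_le_norm_cart)
  also have "\<dots> \<le> norm (mat 1 :: real^'n^'n)"
    by (rule Finite_Cartesian_Product.norm_nth_le)
  finally show ?thesis by (simp add: mat_def)
qed

lemma zero_notin_StiefelEps: "eps < 1 \<Longrightarrow> (0::real^'r^'d) \<notin> StiefelEps eps"
  using one_le_norm_mat_1[where 'n='r] by (simp add: StiefelEps_iff gram_defect_def)

lemma uminus_in_StiefelEps: "- z \<in> StiefelEps eps \<longleftrightarrow> z \<in> StiefelEps eps"
  by (simp add: StiefelEps_iff gram_defect_minus)

lemma lipschitz_on_StiefelEps_nonneg:
  fixes g :: "real^'r^'d \<Rightarrow> 'b::real_normed_vector" and x :: "real^'r^'d"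
  assumes lip: "\<And>y z. y \<in> StiefelEps eps \<Longrightarrow> z \<in> StiefelEps eps \<Longrightarrow> norm (g y - g z) \<le> K * norm (y - z)"
    and x: "x \<in> StiefelEps eps" and eps: "eps < 1"
  shows "0 \<le> K"
proof (rule lipschitz_bound_nonneg[OF lip x])
  show "- x \<in> StiefelEps eps" using x by (simp add: uminus_in_StiefelEps)
  show "x \<noteq> - x"
    using x zero_notin_StiefelEps[OF eps] by (auto simp: eq_neg_iff_add_eq_0 simp flip: scaleR_2)
qed

theorem lemma15:
  fixes f :: "nat \<Rightarrow> real^'r^'d \<Rightarrow> real"
    and gf :: "nat \<Rightarrow> real^'r^'d \<Rightarrow> real^'r^'d"
    and n :: nat and L eps lam gam L_Lc L_Lam :: real
    and H :: "real^'r^'d \<Rightarrow> ((real^'r^'d) \<Rightarrow>\<^sub>L (real^'r^'d))"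
    and gLc :: "real^'r^'d \<Rightarrow> real^'r^'d"
    and x :: "real^'r^'d"
  defines "Lhat \<equiv> max L (Sup ((\<lambda>y. norm (gavg n gf y)) ` StiefelEps eps))"
    and "s \<equiv> Sup ((\<lambda>y. norm (msym (transpose y ** gavg n gf y))) ` StiefelEps eps)"
  assumes n_pos: "n > 0"
    and eps: "0 < eps" "eps < 3/4"
    and lam: "lam > 0"
    and grad_fi: "\<And>i y. i < n \<Longrightarrow> (f i has_derivative (\<lambda>h. gf i y \<bullet> h)) (at y)"
    and smooth_fi: "\<And>i y z. i < n \<Longrightarrow>
        f i z \<le> f i y + gf i y \<bullet> (z - y) + (L/2) * (norm (z - y))^2"
    and F_C2: "\<And>y. (gavg n gf has_derivative blinfun_apply (H y)) (at y)"
    and H_cont: "continuous_on UNIV H"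
    and gam: "gam \<ge> 2 / (3 - 4*eps) * (L * (1 - eps) + 3 * s
              + Lhat^2 * (1 + eps)^2 / (lam * (1 - eps)))"
    and grad_merit: "\<And>y. ((\<lambda>z. merit gam (favg n f z) (gavg n gf z) z) has_derivative (\<lambda>h. gLc y \<bullet> h)) (at y)"
    and Lip_merit: "\<And>y z. y \<in> StiefelEps eps \<Longrightarrow> z \<in> StiefelEps eps \<Longrightarrow>
        norm (gLc y - gLc z) \<le> L_Lc * norm (y - z)"
    and Lip_Lam: "\<And>y z. y \<in> StiefelEps eps \<Longrightarrow> z \<in> StiefelEps eps \<Longrightarrow>
        norm (LamMap lam (gavg n gf y) y - LamMap lam (gavg n gf z) z) \<le> L_Lam * norm (y - z)"
    and Lip_Lam_i: "\<And>i y z. i < n \<Longrightarrow> y \<in> StiefelEps eps \<Longrightarrow> z \<in> StiefelEps eps \<Longrightarrow>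
        norm (LamMap lam (gf i y) y - LamMap lam (gf i z) z) \<le> L_Lam * norm (y - z)"
    and x_in: "x \<in> StiefelEps eps"
  shows "norm (gLc x) \<le> (3 * max Lhat (max L_Lc L_Lam) / (lam * (1 - eps)) + 2)
                         * norm (LamMap lam (gavg n gf x) x)"
proof -
  let ?G = "gavg n gf"
  let ?Lx = "norm (LamMap lam (?G x) x)"
  let ?L' = "max Lhat (max L_Lc L_Lam)"
  obtain y where y: "gram_defect y = 0" and dist: "norm (x - y) \<le> ?Lx / (lam * (1 - eps))"
    using stiefel_point_near_LamMap[OF x_in eps(2) lam] by blast
  have y_in: "y \<in> StiefelEps eps" using y eps by (simp add: StiefelEps_iff)
  have "norm (gLc y) \<le> 2 * norm (LamMap lam (?G y) y)"
    using merit_gradient_eq_tangent_proj[OF F_C2 has_derivative_favg[OF grad_fi] grad_merit y]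
      norm_tangent_proj_le_LamMap y by (simp add: gram_defect_def)
  moreover have "norm (LamMap lam (?G y) y) \<le> ?Lx + L_Lam * norm (x - y)"
    using Lip_Lam[OF y_in x_in] norm_triangle_ineq2[of "LamMap lam (?G y) y" "LamMap lam (?G x) x"]
    by (simp add: norm_minus_commute)
  moreover have "norm (gLc x) \<le> norm (gLc y) + L_Lc * norm (x - y)"
    using Lip_merit[OF x_in y_in] norm_triangle_ineq2[of "gLc x" "gLc y"] by simp
  moreover have "L_Lam * norm (x - y) \<le> ?L' * norm (x - y)" "L_Lc * norm (x - y) \<le> ?L' * norm (x - y)"
    by (intro mult_right_mono; simp)+
  moreover have "0 \<le> L_Lc"
    using lipschitz_on_StiefelEps_nonneg[OF Lip_merit x_in] eps(2) by simp
  then have "?L' * norm (x - y) \<le> ?L' * (?Lx / (lam * (1 - eps)))"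
    using dist by (intro mult_left_mono) auto
  ultimately have "norm (gLc x) \<le> 2 * ?Lx + 3 * ?L' * (?Lx / (lam * (1 - eps)))"
    by linarith
  also have "\<dots> = (3 * ?L' / (lam * (1 - eps)) + 2) * ?Lx"
    using lam eps by (simp add: field_simps)
  finally show ?thesis .
qed

end
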